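(* Let ${\bf x}_0\in\mathbb{R}^m$ be a constant (leader state) and consider $n$ followers with states ${\bf x}_i(t)\in\mathbb{R}^m$ and dynamics $$\dot{\bf x}_i(t)=\sum_{j\in\mathcal{N}_i}{\bf K}_{ji}\big({\bf x}_j(t-T_{ji})-{\bf x}_i(t)\big)+\gamma_i{\bf K}_{0i}\big({\bf x}_0-{\bf x}_i(t)\big),\qquad i=1,\dots,n,$$ where $\mathcal{N}_i\subseteq\{1,\dots,n\}\setminus\{i\}$ are fixed neighbor sets among followers, each ${\bf K}_{ji}$ is constant symmetric positive definite, $T_{ji}\ge0$ are constant (possibly different) delays, $\gamma_i\in\{0,1\}$, and ${\bf K}_{0i}$ is a constant symmetric positive definite matrix whenever $\gamma_i=1$. Assume the whole network including the leader (node $0$ with edges $0\to i$ for $\gamma_i=1$) is connected, with $\gamma_i=1$ for at least one $i$, and that the links among followers are either bidirectional with ${\bf K}_{ji}={\bf K}_{ij}$, or unidirectional but formed into closed rings with identical gains within each ring. Then, regardless of the values of the delays and of the initial conditions, ${\bf x}_i(t)\to{\bf x}_0$ as $t\to\infty$ for all $i=1,\dots,n$. *)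

theory Defs
  imports "HOL-Analysis.Analysis"
begin

definition sym_pos_def :: "real^'m^'m \<Rightarrow> bool" where
  "sym_pos_def A \<longleftrightarrow> transpose A = A \<and> (\<forall>v. v \<noteq> 0 \<longrightarrow> v \<bullet> (A *v v) > 0)"

text \<open>Directed links among followers: (j,i) means j is in N i, i.e. i receives from j
  with gain K j i.\<close>
definition links :: "nat \<Rightarrow> (nat \<Rightarrow> nat set) \<Rightarrow> (nat \<times> nat) set" where
  "links n N = {(j, i). i \<in> {1..n} \<and> j \<in> N i}"

definition net_adj :: "nat \<Rightarrow> (nat \<Rightarrow> nat set) \<Rightarrow> (nat \<Rightarrow> real) \<Rightarrow> (nat \<times> nat) set" where
  "net_adj n N \<gamma> =
     {(a, b). (a, b) \<in> links n N \<or> (b, a) \<in> links n N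
        \<or> (a = 0 \<and> b \<in> {1..n} \<and> \<gamma> b = 1) \<or> (b = 0 \<and> a \<in> {1..n} \<and> \<gamma> a = 1)}"

definition network_connected :: "nat \<Rightarrow> (nat \<Rightarrow> nat set) \<Rightarrow> (nat \<Rightarrow> real) \<Rightarrow> bool" where
  "network_connected n N \<gamma> \<longleftrightarrow> (\<forall>i\<in>{1..n}. (0, i) \<in> (net_adj n N \<gamma>)\<^sup>*)"

definition ring_edges :: "nat list \<Rightarrow> (nat \<times> nat) set" where
  "ring_edges c = {(c ! l, c ! ((l + 1) mod length c)) | l. l < length c}"

definition ring_structure ::
  "nat \<Rightarrow> (nat \<Rightarrow> nat set) \<Rightarrow> (nat \<Rightarrow> nat \<Rightarrow> real^'m^'m) \<Rightarrow> bool" where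
  "ring_structure n N K \<longleftrightarrow>
     (let L = links n N; U = {(j, i). (j, i) \<in> L \<and> (i, j) \<notin> L} in
      (\<forall>(j, i)\<in>L. (i, j) \<in> L \<longrightarrow> K j i = K i j) \<and>
      (\<exists>Rs :: nat list set.
         (\<forall>c\<in>Rs. length c \<ge> 2 \<and> distinct c \<and> ring_edges c \<subseteq> U \<and>
                  (\<exists>G. \<forall>(a, b)\<in>ring_edges c. K a b = G)) \<and>
         (\<forall>e\<in>U. \<exists>!c\<in>Rs. e \<in> ring_edges c)))"

end

theory Submission imports Defs begin

text \<open>
  Write e_i = x_i - x_0 and consider the Lyapunov-Krasovskii functional
  V(t) = sum_i |e_i(t)|^2 + sum_i sum_(j in N_i) integral from t - T_ji to t of e_j' K_ji e_j,
  whose integral terms account for the signals still in transit on the links. Along solutions,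
  V' = sum_i sum_(j in N_i) (e_j' K_ji e_j - e_i' K_ji e_i)(t) - D(t), where D >= 0 collects the
  delayed disagreements e_j(t - T_ji) - e_i(t), measured by K_ji, and the leader terms.
  The double sum vanishes: bidirectional links with equal gains cancel in pairs, and around a ring
  with a common gain the sum telescopes. So V is nonincreasing, the errors are bounded and
  Lipschitz, and a Barbalat-type argument drives every term of D to zero. Hence every pinned
  follower converges to the leader, a delayed link transfers convergence in both directions, and
  connectivity spreads it to all followers.
\<close>

section \<open>Quadratic forms\<close>

definition quad_form :: "real^'n^'n \<Rightarrow> real^'n \<Rightarrow> real" where
  "quad_form A v = v \<bullet> (A *v v)"

lemma quad_form_nonneg: "sym_pos_def A \<Longrightarrow> 0 \<le> quad_form A v"
  unfolding sym_pos_def_def quad_form_def by (cases "v = 0") (auto intro: less_imp_le)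

lemma continuous_on_quad_form:
  fixes f :: "'a::topological_space \<Rightarrow> real^'n"
  assumes "continuous_on S f"
  shows "continuous_on S (\<lambda>s. quad_form A (f s))"
proof -
  have "continuous_on S (\<lambda>s. A *v f s)"
    using continuous_on_compose2[OF matrix_vector_mult_linear_continuous_on assms subset_UNIV] .
  then show ?thesis
    unfolding quad_form_def using assms by (intro continuous_intros)
qed

lemma norm_matrix_vector_mult_le:
  fixes A :: "real^'n^'m"
  shows "norm (A *v v) \<le> onorm ((*v) A) * norm v"
  by (rule onorm) simp

lemma inner_matrix_vector_mult_commute:
  fixes A :: "real^'n^'n"
  assumes "transpose A = A"
  shows "u \<bullet> (A *v v) = v \<bullet> (A *v u)"
  by (metis assms dot_lmul_matrix inner_commute transpose_matrix_vector)

lemma quad_form_polarization: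
  fixes A :: "real^'n^'n"
  assumes "transpose A = A"
  shows "2 * (e \<bullet> (A *v (d - e))) = quad_form A d - quad_form A e - quad_form A (d - e)"
  using inner_matrix_vector_mult_commute[OF assms, of d e] unfolding quad_form_def
  by (simp add: matrix_vector_mult_diff_distrib inner_diff_left inner_diff_right)

lemma abs_quad_form_diff_le:
  "\<bar>quad_form A u - quad_form A v\<bar> \<le> onorm ((*v) A) * (norm u + norm v) * norm (u - v)"
proof -
  have "quad_form A u - quad_form A v = (u - v) \<bullet> (A *v u) + v \<bullet> (A *v (u - v))"
    unfolding quad_form_def
    by (simp add: matrix_vector_mult_diff_distrib inner_diff_left inner_diff_right)
  also have "\<bar>\<dots>\<bar> \<le> norm (u - v) * norm (A *v u) + norm v * norm (A *v (u - v))"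
    by (rule order_trans[OF abs_triangle_ineq add_mono]) (rule Cauchy_Schwarz_ineq2)+
  also have "\<dots> \<le> norm (u - v) * (onorm ((*v) A) * norm u) + norm v * (onorm ((*v) A) * norm (u - v))"
    by (intro add_mono mult_left_mono norm_matrix_vector_mult_le norm_ge_zero)
  finally show ?thesis
    by (simp add: algebra_simps)
qed

lemma quad_form_coercive:
  fixes A :: "real^'n^'n"
  assumes "sym_pos_def A"
  obtains c where "c > 0" "\<And>v. c * (norm v)\<^sup>2 \<le> quad_form A v"
proof -
  have "continuous_on (sphere 0 1) (quad_form A)"
    unfolding quad_form_def by (intro continuous_intros)
  moreover have "sphere (0::real^'n) 1 \<noteq> {}"
    by (simp add: sphere_def) (metis vector_choose_size zero_le_one)
  ultimately obtain u where u: "u \<in> sphere 0 1" and min: "\<forall>w\<in>sphere 0 1. quad_form A u \<le> quad_form A w"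
    using continuous_attains_inf[OF compact_sphere] by blast
  have "quad_form A u > 0"
    using assms u unfolding sym_pos_def_def quad_form_def by (metis mem_sphere_0 norm_zero zero_neq_one)
  moreover have "quad_form A u * (norm v)\<^sup>2 \<le> quad_form A v" for v
  proof (cases "v = 0")
    case False
    have "quad_form A v = (norm v)\<^sup>2 * quad_form A (v /\<^sub>R norm v)"
      using False by (simp add: quad_form_def matrix_vector_mult_scaleR power2_eq_square field_simps)
    moreover have "quad_form A u \<le> quad_form A (v /\<^sub>R norm v)"
      using False min by simp
    ultimately show ?thesis
      by (metis mult.commute mult_left_mono zero_le_power2)
  qed (simp add: quad_form_def)
  ultimately show ?thesis
    using that by blast
qed

lemma tendsto_zero_of_quad_form:
  assumes A: "sym_pos_def A" and lim: "((\<lambda>t. quad_form A (f t)) \<longlongrightarrow> 0) F"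
  shows "(f \<longlongrightarrow> 0) F"
proof -
  obtain c where c: "c > 0" "\<And>v. c * (norm v)\<^sup>2 \<le> quad_form A v"
    using quad_form_coercive[OF A] by blast
  have "((\<lambda>t. (norm (f t))\<^sup>2) \<longlongrightarrow> 0) F"
  proof (rule tendsto_sandwich[of "\<lambda>_. 0" _ _ "\<lambda>t. quad_form A (f t) / c"])
    show "eventually (\<lambda>t. (norm (f t))\<^sup>2 \<le> quad_form A (f t) / c) F"
      using c by (simp add: field_simps mult.commute)
    show "((\<lambda>t. quad_form A (f t) / c) \<longlongrightarrow> 0) F"
      using tendsto_divide_zero[OF lim] by simp
  qed auto
  then have "((\<lambda>t. sqrt ((norm (f t))\<^sup>2)) \<longlongrightarrow> sqrt 0) F"
    by (rule tendsto_real_sqrt)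
  then show ?thesis
    by (simp add: tendsto_norm_zero_iff)
qed

section \<open>Sums over ring-structured links\<close>

lemma sum_rotate_mod:
  fixes a :: "nat \<Rightarrow> 'a::comm_monoid_add"
  assumes "0 < k"
  shows "(\<Sum>l<k. a ((l + 1) mod k)) = (\<Sum>l<k. a l)"
proof -
  obtain m where k: "k = Suc m"
    using assms gr0_implies_Suc by blast
  have "(\<Sum>l<Suc m. a ((l + 1) mod Suc m)) = (\<Sum>l<m. a (Suc l)) + a 0"
    by (simp add: sum.lessThan_Suc)
  also have "\<dots> = (\<Sum>l<Suc m. a l)"
    by (subst sum.lessThan_Suc_shift) (simp add: add.commute)
  finally show ?thesis
    using k by simp
qed

lemma ring_edges_eq_image:
  "ring_edges c = (\<lambda>l. (c ! l, c ! ((l + 1) mod length c))) ` {..<length c}"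
  unfolding ring_edges_def by auto

lemma sum_ring_edges_diff_eq_0:
  fixes \<phi> :: "nat \<Rightarrow> 'a::ab_group_add"
  assumes "distinct c"
  shows "(\<Sum>e\<in>ring_edges c. \<phi> (fst e) - \<phi> (snd e)) = 0"
proof (cases "c = []")
  case False
  let ?k = "length c"
  have "inj_on (\<lambda>l. (c ! l, c ! ((l + 1) mod ?k))) {..<?k}"
    using assms by (auto simp: inj_on_def nth_eq_iff_index_eq)
  then have "(\<Sum>e\<in>ring_edges c. \<phi> (fst e) - \<phi> (snd e)) = (\<Sum>l<?k. \<phi> (c ! l) - \<phi> (c ! ((l + 1) mod ?k)))"
    by (simp add: ring_edges_eq_image sum.reindex)
  also have "\<dots> = 0"
    using sum_rotate_mod[of ?k "\<lambda>l. \<phi> (c ! l)"] False by (simp add: sum_subtractf)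
  finally show ?thesis .
qed (simp add: ring_edges_def)

lemma sum_swap_antisym_eq_0:
  fixes \<phi> :: "'a \<times> 'a \<Rightarrow> real"
  assumes swap: "prod.swap ` B = B" and antisym: "\<And>p. p \<in> B \<Longrightarrow> \<phi> (prod.swap p) = - \<phi> p"
  shows "sum \<phi> B = 0"
proof -
  have "sum \<phi> B = sum (\<phi> \<circ> prod.swap) B"
    using sum.reindex[of prod.swap B \<phi>] swap by simp
  also have "\<dots> = - sum \<phi> B"
    using antisym by (simp add: sum_negf)
  finally show ?thesis
    by simp
qed

lemma sum_ring_partition_eq_0:
  fixes \<phi> :: "'b \<Rightarrow> nat \<Rightarrow> 'a::ab_group_add"
  assumes "finite U"
    and ring: "\<And>c. c \<in> Rs \<Longrightarrow> distinct c"
      "\<And>c. c \<in> Rs \<Longrightarrow> ring_edges c \<subseteq> U"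
      "\<And>c. c \<in> Rs \<Longrightarrow> \<exists>G. \<forall>(a, b)\<in>ring_edges c. K a b = G"
    and partition: "\<forall>e\<in>U. \<exists>!c\<in>Rs. e \<in> ring_edges c"
  shows "(\<Sum>(a, b)\<in>U. \<phi> (K a b) a - \<phi> (K a b) b) = 0"
proof -
  define \<psi> where "\<psi> = (\<lambda>(a, b). \<phi> (K a b) a - \<phi> (K a b) b)"
  define ring_of where "ring_of e = (THE c. c \<in> Rs \<and> e \<in> ring_edges c)" for e
  have ring_of: "ring_of e \<in> Rs" "e \<in> ring_edges (ring_of e)" if "e \<in> U" for e
    using theI'[OF partition[rule_format, OF that]] unfolding ring_of_def by auto
  have ring_of_unique: "ring_of e = c" if "c \<in> Rs" "e \<in> ring_edges c" for c e
    using partition ring_of ring(2) that by (metis subsetD)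
  have rings_used: "c \<in> Rs" if "c \<in> ring_of ` U" for c
    using that ring_of(1) by blast
  have "sum \<psi> U = (\<Sum>c\<in>ring_of ` U. sum \<psi> {e \<in> U. ring_of e = c})"
    by (rule sum.image_gen[OF \<open>finite U\<close>])
  also have "\<dots> = (\<Sum>c\<in>ring_of ` U. sum \<psi> (ring_edges c))"
  proof (rule sum.cong[OF refl])
    fix c assume "c \<in> ring_of ` U"
    then have "c \<in> Rs"
      by (rule rings_used)
    then have "{e \<in> U. ring_of e = c} = ring_edges c"
      using ring_of(2) ring_of_unique ring(2) by blast
    then show "sum \<psi> {e \<in> U. ring_of e = c} = sum \<psi> (ring_edges c)"
      by simp
  qed
  also have "\<dots> = 0"
  proof (rule sum.neutral, rule ballI)
    fix c assume "c \<in> ring_of ` U"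
    then have "c \<in> Rs"
      by (rule rings_used)
    then obtain G where G: "\<forall>(a, b)\<in>ring_edges c. K a b = G"
      using ring(3) by blast
    have "sum \<psi> (ring_edges c) = (\<Sum>e\<in>ring_edges c. \<phi> G (fst e) - \<phi> G (snd e))"
      using G unfolding \<psi>_def by (intro sum.cong) auto
    then show "sum \<psi> (ring_edges c) = 0"
      using sum_ring_edges_diff_eq_0[OF ring(1)[OF \<open>c \<in> Rs\<close>]] by simp
  qed
  finally show ?thesis
    unfolding \<psi>_def .
qed

lemma links_eq_swap_Sigma: "links n N = prod.swap ` Sigma {1..n} N"
  unfolding links_def by force

lemma sum_links_eq:
  assumes "\<forall>i\<in>{1..n}. finite (N i)"
  shows "(\<Sum>i\<in>{1..n}. \<Sum>j\<in>N i. \<psi> j i) = (\<Sum>(j, i)\<in>links n N. \<psi> j i)"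
  using assms by (simp add: links_eq_swap_Sigma sum.Sigma sum.reindex case_prod_beta)

lemma ring_structure_balance:
  fixes \<phi> :: "real^'m^'m \<Rightarrow> nat \<Rightarrow> real"
  assumes fin: "\<forall>i\<in>{1..n}. finite (N i)" and rs: "ring_structure n N K"
  shows "(\<Sum>i\<in>{1..n}. \<Sum>j\<in>N i. \<phi> (K j i) j - \<phi> (K j i) i) = 0"
proof -
  define L where "L = links n N"
  define U where "U = {(j, i). (j, i) \<in> L \<and> (i, j) \<notin> L}"
  define B where "B = {(j, i). (j, i) \<in> L \<and> (i, j) \<in> L}"
  define \<psi> where "\<psi> = (\<lambda>(j, i). \<phi> (K j i) j - \<phi> (K j i) i)"
  have rs': "(\<forall>(j, i)\<in>L. (i, j) \<in> L \<longrightarrow> K j i = K i j) \<and>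
      (\<exists>Rs. (\<forall>c\<in>Rs. 2 \<le> length c \<and> distinct c \<and> ring_edges c \<subseteq> U \<and> (\<exists>G. \<forall>(a, b)\<in>ring_edges c. K a b = G)) \<and>
        (\<forall>e\<in>U. \<exists>!c\<in>Rs. e \<in> ring_edges c))"
    using rs unfolding ring_structure_def Let_def L_def U_def by simp
  then have sym: "\<forall>(j, i)\<in>L. (i, j) \<in> L \<longrightarrow> K j i = K i j"
    by (rule conjunct1)
  from conjunct2[OF rs'] obtain Rs where rings: "\<forall>c\<in>Rs. 2 \<le> length c \<and> distinct c \<and> ring_edges c \<subseteq> U \<and> (\<exists>G. \<forall>(a, b)\<in>ring_edges c. K a b = G)"
    and partition: "\<forall>e\<in>U. \<exists>!c\<in>Rs. e \<in> ring_edges c"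
    by (elim exE conjE)
  have ring: "distinct c" "ring_edges c \<subseteq> U" "\<exists>G. \<forall>(a, b)\<in>ring_edges c. K a b = G"
    if "c \<in> Rs" for c
    using bspec[OF rings that] by simp_all
  have "finite L"
    unfolding L_def links_eq_swap_Sigma using fin by (intro finite_imageI finite_SigmaI) auto
  have L_split: "L = B \<union> U" "B \<inter> U = {}" and "B \<subseteq> L" "U \<subseteq> L"
    unfolding B_def U_def by auto
  have "(\<Sum>i\<in>{1..n}. \<Sum>j\<in>N i. \<phi> (K j i) j - \<phi> (K j i) i) = sum \<psi> L"
    unfolding L_def \<psi>_def by (rule sum_links_eq[OF fin])
  also have "\<dots> = sum \<psi> B + sum \<psi> U"
    unfolding L_split(1) using L_split(2) \<open>B \<subseteq> L\<close> \<open>U \<subseteq> L\<close> \<open>finite L\<close>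
    by (intro sum.union_disjoint) (auto intro: finite_subset[of _ L])
  also have "sum \<psi> B = 0"
  proof (rule sum_swap_antisym_eq_0)
    show "prod.swap ` B = B"
      unfolding B_def by force
    fix p assume "p \<in> B"
    then show "\<psi> (prod.swap p) = - \<psi> p"
      using sym unfolding B_def \<psi>_def by auto
  qed
  also have "sum \<psi> U = 0"
    unfolding \<psi>_def using finite_subset[OF \<open>U \<subseteq> L\<close> \<open>finite L\<close>] ring partition
    by (rule sum_ring_partition_eq_0)
  finally show ?thesis
    by simp
qed

section \<open>Calculus\<close>

lemma has_real_derivative_integral_window:
  fixes g :: "real \<Rightarrow> real"
  assumes g: "continuous_on UNIV g" and "0 \<le> \<tau>"
  shows "((\<lambda>s. integral {s - \<tau>..s} g) has_real_derivative g t - g (t - \<tau>)) (at t)"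
proof -
  define a where "a = t - \<tau> - 1"
  have ftc: "((\<lambda>s. integral {a..s} g) has_real_derivative g s) (at s)" if "a < s" for s
  proof -
    have "((\<lambda>s. integral {a..s} g) has_real_derivative g s) (at s within {a..s + 1})"
      using that by (intro integral_has_real_derivative continuous_on_subset[OF g]) auto
    moreover have "at s within {a..s + 1} = at s"
      using that by (intro at_within_interior) simp
    ultimately show ?thesis
      by simp
  qed
  have shift: "((\<lambda>s. s - \<tau>) has_real_derivative 1) (at t)"
    by (auto intro!: derivative_eq_intros)
  have "((\<lambda>s. integral {a..s} g) has_real_derivative g (t - \<tau>)) (at (t - \<tau>))"
    by (rule ftc) (simp add: a_def)
  from DERIV_chain2[OF this shift]
  have "((\<lambda>s. integral {a..s - \<tau>} g) has_real_derivative g (t - \<tau>) * 1) (at t)" .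
  moreover have "a < t"
    using \<open>0 \<le> \<tau>\<close> by (simp add: a_def)
  ultimately have deriv: "((\<lambda>s. integral {a..s} g - integral {a..s - \<tau>} g) has_real_derivative g t - g (t - \<tau>)) (at t)"
    using DERIV_diff[OF ftc] by fastforce
  have window: "integral {a..s} g - integral {a..s - \<tau>} g = integral {s - \<tau>..s} g" if "t - 1 < s" for s
  proof -
    have "a \<le> s - \<tau>" "s - \<tau> \<le> s"
      using that \<open>0 \<le> \<tau>\<close> by (auto simp: a_def)
    moreover have "g integrable_on {a..s}"
      by (intro integrable_continuous_real continuous_on_subset[OF g]) simp
    ultimately show ?thesis
      using Henstock_Kurzweil_Integration.integral_combine[where a = a and c = "s - \<tau>" and b = s and f = g] by (simp add: algebra_simps)
  qed
  show ?thesis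
    by (rule has_field_derivative_transform_within_open[OF deriv, of "{t - 1<..}"]) (auto simp: window)
qed

lemma has_real_derivative_inner_self:
  fixes f :: "real \<Rightarrow> 'a::real_inner"
  assumes "(f has_vector_derivative f') (at t)"
  shows "((\<lambda>s. f s \<bullet> f s) has_real_derivative 2 * (f t \<bullet> f')) (at t)"
proof -
  have f: "(f has_derivative (\<lambda>h. h *\<^sub>R f')) (at t)"
    using assms by (simp add: has_vector_derivative_def)
  have "((\<lambda>s. f s \<bullet> f s) has_derivative (\<lambda>h. f t \<bullet> (h *\<^sub>R f') + (h *\<^sub>R f') \<bullet> f t)) (at t)"
    by (rule has_derivative_inner[OF f f])
  moreover have "(\<lambda>h. f t \<bullet> (h *\<^sub>R f') + (h *\<^sub>R f') \<bullet> f t) = (*) (2 * (f t \<bullet> f'))"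
    by (auto simp: fun_eq_iff inner_commute algebra_simps)
  ultimately show ?thesis
    by (simp add: has_field_derivative_def)
qed

lemma lipschitz_on_vector_derivative_bound:
  fixes f :: "real \<Rightarrow> 'a::real_normed_vector"
  assumes "convex S"
    and deriv: "\<And>t. t \<in> S \<Longrightarrow> (f has_vector_derivative f' t) (at t within S)"
    and bound: "\<And>t. t \<in> S \<Longrightarrow> norm (f' t) \<le> C" and "0 \<le> C"
  shows "C-lipschitz_on S f"
proof (rule lipschitz_onI)
  fix s t assume "s \<in> S" "t \<in> S"
  have "onorm (\<lambda>h. h *\<^sub>R f' u) = norm (f' u)" for u
    using onorm_scaleR_left[OF bounded_linear_ident] by (simp add: onorm_id)
  then show "dist (f s) (f t) \<le> C * dist s t"
    using differentiable_bound[OF \<open>convex S\<close> deriv[unfolded has_vector_derivative_def] _ \<open>s \<in> S\<close> \<open>t \<in> S\<close>] bound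
    by (simp add: dist_norm)
qed (rule \<open>0 \<le> C\<close>)

lemma lipschitz_on_quad_form:
  assumes lip: "L-lipschitz_on S d" and bound: "\<And>t. t \<in> S \<Longrightarrow> norm (d t) \<le> M" and "0 \<le> M"
  shows "(2 * onorm ((*v) A) * M * L)-lipschitz_on S (\<lambda>t. quad_form A (d t))"
proof (rule lipschitz_onI)
  fix s t assume "s \<in> S" "t \<in> S"
  have "\<bar>quad_form A (d s) - quad_form A (d t)\<bar> \<le> onorm ((*v) A) * (norm (d s) + norm (d t)) * norm (d s - d t)"
    by (rule abs_quad_form_diff_le)
  also have "\<dots> \<le> onorm ((*v) A) * (M + M) * (L * dist s t)"
  proof (rule mult_mono)
    show "onorm ((*v) A) * (norm (d s) + norm (d t)) \<le> onorm ((*v) A) * (M + M)"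
      using bound \<open>s \<in> S\<close> \<open>t \<in> S\<close> by (intro mult_left_mono add_mono onorm_pos_le) auto
    show "norm (d s - d t) \<le> L * dist s t"
      using lipschitz_onD[OF lip \<open>s \<in> S\<close> \<open>t \<in> S\<close>] by (simp add: dist_norm)
  qed (use \<open>0 \<le> M\<close> in \<open>simp_all add: onorm_pos_le\<close>)
  finally show "dist (quad_form A (d s)) (quad_form A (d t)) \<le> 2 * onorm ((*v) A) * M * L * dist s t"
    by (simp add: dist_real_def algebra_simps)
next
  show "0 \<le> 2 * onorm ((*v) A) * M * L"
    using lipschitz_on_nonneg[OF lip] \<open>0 \<le> M\<close> by (simp add: onorm_pos_le)
qed

lemma lyapunov_decrease_on_window:
  fixes V f h :: "real \<Rightarrow> real"
  assumes deriv: "\<And>s. s \<in> {t..t + \<delta>} \<Longrightarrow> (V has_real_derivative - f s) (at s)"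
    and h_le_f: "\<And>s. s \<in> {t..t + \<delta>} \<Longrightarrow> h s \<le> f s"
    and lip: "L-lipschitz_on {t..t + \<delta>} h"
    and "\<epsilon> \<le> h t" "0 \<le> \<delta>" "L * \<delta> \<le> \<epsilon> / 2"
  shows "V (t + \<delta>) \<le> V t - \<epsilon> / 2 * \<delta>"
proof -
  define W where "W s = V s + \<epsilon> / 2 * s" for s
  have "W (t + \<delta>) \<le> W t"
  proof (rule DERIV_nonpos_imp_nonincreasing[of t "t + \<delta>" W])
    show "t \<le> t + \<delta>"
      using \<open>0 \<le> \<delta>\<close> by simp
    fix s assume s: "t \<le> s" "s \<le> t + \<delta>"
    have "dist (h s) (h t) \<le> L * dist s t"
      using lipschitz_onD[OF lip] s \<open>0 \<le> \<delta>\<close> by simp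
    also have "\<dots> \<le> L * \<delta>"
      using s lipschitz_on_nonneg[OF lip] by (intro mult_left_mono) (auto simp: dist_real_def)
    finally have "\<epsilon> / 2 \<le> f s"
      using \<open>\<epsilon> \<le> h t\<close> \<open>L * \<delta> \<le> \<epsilon> / 2\<close> h_le_f[of s] s by (auto simp: dist_real_def)
    moreover have "(W has_real_derivative - f s + \<epsilon> / 2) (at s)"
      unfolding W_def using s by (auto intro!: derivative_eq_intros deriv)
    ultimately show "\<exists>y. (W has_real_derivative y) (at s) \<and> y \<le> 0"
      by force
  qed
  then show ?thesis
    by (simp add: W_def field_simps)
qed

lemma frequent_drops_descent:
  fixes V :: "real \<Rightarrow> real"
  assumes antimono: "\<And>s t. t\<^sub>0 \<le> s \<Longrightarrow> s \<le> t \<Longrightarrow> V t \<le> V s"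
    and drops: "\<And>b. t\<^sub>0 \<le> b \<Longrightarrow> \<exists>t\<ge>b. V (t + \<delta>) \<le> V t - c" and "0 \<le> \<delta>"
  shows "\<exists>t\<ge>t\<^sub>0. V t \<le> V t\<^sub>0 - real m * c"
proof (induction m)
  case (Suc m)
  then obtain t where t: "t\<^sub>0 \<le> t" "V t \<le> V t\<^sub>0 - real m * c"
    by blast
  obtain s where s: "t \<le> s" "V (s + \<delta>) \<le> V s - c"
    using drops[OF t(1)] by blast
  have "V (s + \<delta>) \<le> V t\<^sub>0 - real (Suc m) * c"
    using antimono[of t s] s t by (simp add: algebra_simps)
  moreover have "t\<^sub>0 \<le> s + \<delta>"
    using s t \<open>0 \<le> \<delta>\<close> by simp
  ultimately show ?case
    by blast
qed (intro exI[of _ t\<^sub>0], simp)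

text \<open>A version of Barbalat's lemma.\<close>

lemma lipschitz_dissipation_tendsto_zero:
  fixes V f h :: "real \<Rightarrow> real"
  assumes deriv: "\<And>t. t\<^sub>0 \<le> t \<Longrightarrow> (V has_real_derivative - f t) (at t)"
    and V_nonneg: "\<And>t. t\<^sub>0 \<le> t \<Longrightarrow> 0 \<le> V t"
    and h_nonneg: "\<And>t. t\<^sub>0 \<le> t \<Longrightarrow> 0 \<le> h t"
    and h_le_f: "\<And>t. t\<^sub>0 \<le> t \<Longrightarrow> h t \<le> f t"
    and lip: "L-lipschitz_on {t\<^sub>0..} h"
  shows "(h \<longlongrightarrow> 0) at_top"
proof (rule tendstoI)
  fix \<epsilon> :: real assume "0 < \<epsilon>"
  define \<delta> where "\<delta> = \<epsilon> / (2 * (L + 1))"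
  have "0 \<le> L"
    using lip by (rule lipschitz_on_nonneg)
  then have "0 < \<delta>" "L * \<delta> \<le> \<epsilon> / 2"
    using \<open>0 < \<epsilon>\<close> by (auto simp: \<delta>_def field_simps)
  have antimono: "V t \<le> V s" if "t\<^sub>0 \<le> s" "s \<le> t" for s t
  proof (rule DERIV_nonpos_imp_nonincreasing[OF \<open>s \<le> t\<close>])
    fix u assume "s \<le> u" "u \<le> t"
    then have "t\<^sub>0 \<le> u"
      using that by linarith
    then show "\<exists>y. (V has_real_derivative y) (at u) \<and> y \<le> 0"
      using deriv h_nonneg[of u] h_le_f[of u] by force
  qed
  have drop: "V (t + \<delta>) \<le> V t - \<epsilon> / 2 * \<delta>" if "t\<^sub>0 \<le> t" "\<epsilon> \<le> h t" for t
  proof (rule lyapunov_decrease_on_window[where f = f])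
    show "L-lipschitz_on {t..t + \<delta>} h"
      using that by (intro lipschitz_on_subset[OF lip]) auto
  qed (use that \<open>0 < \<delta>\<close> \<open>L * \<delta> \<le> \<epsilon> / 2\<close> deriv h_le_f in auto)
  show "eventually (\<lambda>t. dist (h t) 0 < \<epsilon>) at_top"
  proof (rule ccontr)
    assume "\<not> eventually (\<lambda>t. dist (h t) 0 < \<epsilon>) at_top"
    then have "\<exists>t\<ge>b. \<epsilon> \<le> h t" if "t\<^sub>0 \<le> b" for b
      using that h_nonneg unfolding eventually_at_top_linorder
      by (metis dist_real_def diff_zero abs_of_nonneg not_less order_trans)
    then have drops: "\<exists>t\<ge>b. V (t + \<delta>) \<le> V t - \<epsilon> / 2 * \<delta>" if "t\<^sub>0 \<le> b" for b
      using that drop by (meson order_trans)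
    obtain m :: nat where m: "V t\<^sub>0 < real m * (\<epsilon> / 2 * \<delta>)"
      using reals_Archimedean3 \<open>0 < \<epsilon>\<close> \<open>0 < \<delta>\<close> by (metis divide_pos_pos mult_pos_pos zero_less_numeral)
    obtain t where "t\<^sub>0 \<le> t" "V t \<le> V t\<^sub>0 - real m * (\<epsilon> / 2 * \<delta>)"
      using frequent_drops_descent[OF antimono drops] \<open>0 < \<delta>\<close> by fastforce
    then show False
      using V_nonneg[of t] m by linarith
  qed
qed

lemma tendsto_at_top_shift_iff:
  fixes f :: "real \<Rightarrow> 'a::topological_space"
  shows "((\<lambda>t. f (t + c)) \<longlongrightarrow> l) at_top \<longleftrightarrow> (f \<longlongrightarrow> l) at_top"
proof -
  have shift: "filterlim (\<lambda>t. t + d) at_top at_top" for d :: real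
  proof -
    have "filterlim (\<lambda>t. d + t) at_top at_top"
      by (rule filterlim_tendsto_add_at_top[OF tendsto_const filterlim_ident])
    then show ?thesis
      by (simp add: add.commute)
  qed
  show ?thesis
  proof
    assume "((\<lambda>t. f (t + c)) \<longlongrightarrow> l) at_top"
    from filterlim_compose[OF this shift[of "- c"]] show "(f \<longlongrightarrow> l) at_top"
      by simp
  qed (rule filterlim_compose[OF _ shift])
qed

section \<open>The leader-follower network\<close>

locale leader_follower_network =
  fixes n :: nat
    and x0 :: "real^'m"
    and N :: "nat \<Rightarrow> nat set"
    and K :: "nat \<Rightarrow> nat \<Rightarrow> real^'m^'m"
    and T :: "nat \<Rightarrow> nat \<Rightarrow> real"
    and \<gamma> :: "nat \<Rightarrow> real"
    and x :: "nat \<Rightarrow> real \<Rightarrow> real^'m"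
  assumes nbrs: "\<forall>i\<in>{1..n}. N i \<subseteq> {1..n}"
    and gains: "\<forall>i\<in>{1..n}. \<forall>j\<in>N i. sym_pos_def (K j i)"
    and delays: "\<forall>i\<in>{1..n}. \<forall>j\<in>N i. T j i \<ge> 0"
    and gamma01: "\<forall>i\<in>{1..n}. \<gamma> i = 0 \<or> \<gamma> i = 1"
    and leader_gains: "\<forall>i\<in>{1..n}. \<gamma> i = 1 \<longrightarrow> sym_pos_def (K 0 i)"
    and link_structure: "ring_structure n N K"
    and cont: "\<forall>i\<in>{1..n}. continuous_on UNIV (x i)"
    and dyn: "\<forall>i\<in>{1..n}. \<forall>t>0.
       (x i has_vector_derivative
          ((\<Sum>j\<in>N i. K j i *v (x j (t - T j i) - x i t)) + \<gamma> i *\<^sub>R (K 0 i *v (x0 - x i t))))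
       (at t)"
begin

definition err :: "nat \<Rightarrow> real \<Rightarrow> real^'m" where
  "err i t = x i t - x0"

definition err_rate :: "nat \<Rightarrow> real \<Rightarrow> real^'m" where
  "err_rate i t = (\<Sum>j\<in>N i. K j i *v (err j (t - T j i) - err i t)) - \<gamma> i *\<^sub>R (K 0 i *v err i t)"

definition node_energy :: "nat \<Rightarrow> real \<Rightarrow> real" where
  "node_energy i t = err i t \<bullet> err i t
     + (\<Sum>j\<in>N i. integral {t - T j i..t} (\<lambda>s. quad_form (K j i) (err j s)))"

definition energy :: "real \<Rightarrow> real" where
  "energy t = (\<Sum>i\<in>{1..n}. node_energy i t)"

definition node_dissipation :: "nat \<Rightarrow> real \<Rightarrow> real" where
  "node_dissipation i t = (\<Sum>j\<in>N i. quad_form (K j i) (err j (t - T j i) - err i t))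
     + 2 * \<gamma> i * quad_form (K 0 i) (err i t)"

definition dissipation :: "real \<Rightarrow> real" where
  "dissipation t = (\<Sum>i\<in>{1..n}. node_dissipation i t)"

definition delay_bound :: real where
  "delay_bound = (\<Sum>i\<in>{1..n}. \<Sum>j\<in>N i. T j i)"

lemma neighbour_in_followers: "i \<in> {1..n} \<Longrightarrow> j \<in> N i \<Longrightarrow> j \<in> {1..n}"
  using nbrs by blast

lemma finite_neighbours: "i \<in> {1..n} \<Longrightarrow> finite (N i)"
  using nbrs finite_subset by blast

lemma delay_bounds:
  assumes "i \<in> {1..n}" "j \<in> N i"
  shows "0 \<le> T j i" "T j i \<le> delay_bound"
proof -
  show "0 \<le> T j i"
    using assms delays by blast
  have "T j i \<le> (\<Sum>j\<in>N i. T j i)"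
    using assms delays finite_neighbours by (intro member_le_sum) auto
  also have "\<dots> \<le> delay_bound"
    unfolding delay_bound_def using assms delays finite_neighbours
    by (intro member_le_sum[where f = "\<lambda>i. \<Sum>j\<in>N i. T j i"] sum_nonneg) auto
  finally show "T j i \<le> delay_bound" .
qed

lemma delay_bound_nonneg: "0 \<le> delay_bound"
  unfolding delay_bound_def using delays by (intro sum_nonneg) auto

lemma err_continuous: "i \<in> {1..n} \<Longrightarrow> continuous_on UNIV (err i)"
  unfolding err_def using cont by (auto intro: continuous_intros)

lemma err_has_vector_derivative:
  assumes "i \<in> {1..n}" "0 < t"
  shows "(err i has_vector_derivative err_rate i t) (at t)"
proof -
  have "err_rate i t = (\<Sum>j\<in>N i. K j i *v (x j (t - T j i) - x i t)) + \<gamma> i *\<^sub>R (K 0 i *v (x0 - x i t))"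
    unfolding err_rate_def err_def by (simp add: matrix_vector_mult_diff_distrib algebra_simps)
  then show ?thesis
    using dyn assms unfolding err_def by (auto intro!: derivative_eq_intros)
qed

lemma leader_energy_nonneg: "i \<in> {1..n} \<Longrightarrow> 0 \<le> \<gamma> i * quad_form (K 0 i) (err i t)"
  using gamma01 leader_gains quad_form_nonneg by fastforce

lemma link_energy_nonneg: "i \<in> {1..n} \<Longrightarrow> j \<in> N i \<Longrightarrow> 0 \<le> quad_form (K j i) v"
  using gains quad_form_nonneg by blast

lemma node_dissipation_nonneg: "i \<in> {1..n} \<Longrightarrow> 0 \<le> node_dissipation i t"
  unfolding node_dissipation_def using leader_energy_nonneg link_energy_nonneg
  by (intro add_nonneg_nonneg sum_nonneg) auto

lemma node_dissipation_le_dissipation: "i \<in> {1..n} \<Longrightarrow> node_dissipation i t \<le> dissipation t"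
  unfolding dissipation_def using node_dissipation_nonneg by (intro member_le_sum) auto

lemma link_energy_le_dissipation:
  assumes "i \<in> {1..n}" "j \<in> N i"
  shows "quad_form (K j i) (err j (t - T j i) - err i t) \<le> dissipation t"
proof -
  have "quad_form (K j i) (err j (t - T j i) - err i t) \<le> node_dissipation i t"
    unfolding node_dissipation_def using assms leader_energy_nonneg link_energy_nonneg finite_neighbours
    by (intro add_increasing2 member_le_sum) auto
  also have "\<dots> \<le> dissipation t"
    using assms(1) by (rule node_dissipation_le_dissipation)
  finally show ?thesis .
qed

lemma leader_energy_le_dissipation:
  assumes "i \<in> {1..n}" "\<gamma> i = 1"
  shows "quad_form (K 0 i) (err i t) \<le> dissipation t"
proof -
  have "sym_pos_def (K 0 i)"
    using assms leader_gains by blast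
  then have "quad_form (K 0 i) (err i t) \<le> node_dissipation i t"
    unfolding node_dissipation_def using assms quad_form_nonneg link_energy_nonneg
    by (intro add_increasing sum_nonneg) auto
  also have "\<dots> \<le> dissipation t"
    using assms(1) by (rule node_dissipation_le_dissipation)
  finally show ?thesis .
qed

lemma node_energy_balance:
  assumes "i \<in> {1..n}"
  shows "2 * (err i t \<bullet> err_rate i t)
      + (\<Sum>j\<in>N i. quad_form (K j i) (err j t) - quad_form (K j i) (err j (t - T j i)))
    = (\<Sum>j\<in>N i. quad_form (K j i) (err j t) - quad_form (K j i) (err i t)) - node_dissipation i t"
proof -
  have polarization: "2 * (err i t \<bullet> (K j i *v (err j (t - T j i) - err i t)))
      = quad_form (K j i) (err j (t - T j i)) - quad_form (K j i) (err i t)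
        - quad_form (K j i) (err j (t - T j i) - err i t)" if "j \<in> N i" for j
    using gains assms that by (intro quad_form_polarization) (auto simp: sym_pos_def_def)
  have "2 * (err i t \<bullet> err_rate i t)
      = (\<Sum>j\<in>N i. 2 * (err i t \<bullet> (K j i *v (err j (t - T j i) - err i t))))
        - 2 * \<gamma> i * quad_form (K 0 i) (err i t)"
    unfolding err_rate_def quad_form_def
    by (simp add: inner_diff_right inner_sum_right sum_distrib_left algebra_simps)
  also have "\<dots> = (\<Sum>j\<in>N i. quad_form (K j i) (err j (t - T j i)) - quad_form (K j i) (err i t)
        - quad_form (K j i) (err j (t - T j i) - err i t)) - 2 * \<gamma> i * quad_form (K 0 i) (err i t)"
    by (simp add: polarization cong: sum.cong)
  finally show ?thesis
    unfolding node_dissipation_def by (simp add: sum_subtractf sum.distrib algebra_simps)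
qed

lemma node_energy_has_real_derivative:
  assumes i: "i \<in> {1..n}" and "0 < t"
  shows "(node_energy i has_real_derivative 2 * (err i t \<bullet> err_rate i t)
      + (\<Sum>j\<in>N i. quad_form (K j i) (err j t) - quad_form (K j i) (err j (t - T j i)))) (at t)"
  unfolding node_energy_def
proof (intro DERIV_add DERIV_sum)
  show "((\<lambda>t. err i t \<bullet> err i t) has_real_derivative 2 * (err i t \<bullet> err_rate i t)) (at t)"
    using err_has_vector_derivative[OF i \<open>0 < t\<close>] by (rule has_real_derivative_inner_self)
  fix j assume j: "j \<in> N i"
  show "((\<lambda>t. integral {t - T j i..t} (\<lambda>s. quad_form (K j i) (err j s))) has_real_derivative
      quad_form (K j i) (err j t) - quad_form (K j i) (err j (t - T j i))) (at t)"
    using err_continuous[OF neighbour_in_followers[OF i j]] delay_bounds(1)[OF i j]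
    by (intro has_real_derivative_integral_window continuous_on_quad_form)
qed

lemma energy_has_real_derivative:
  assumes "0 < t"
  shows "(energy has_real_derivative - dissipation t) (at t)"
proof -
  have "(energy has_real_derivative (\<Sum>i\<in>{1..n}. 2 * (err i t \<bullet> err_rate i t)
      + (\<Sum>j\<in>N i. quad_form (K j i) (err j t) - quad_form (K j i) (err j (t - T j i))))) (at t)"
    unfolding energy_def using assms by (intro DERIV_sum node_energy_has_real_derivative)
  also have "(\<Sum>i\<in>{1..n}. 2 * (err i t \<bullet> err_rate i t)
      + (\<Sum>j\<in>N i. quad_form (K j i) (err j t) - quad_form (K j i) (err j (t - T j i))))
    = (\<Sum>i\<in>{1..n}. \<Sum>j\<in>N i. quad_form (K j i) (err j t) - quad_form (K j i) (err i t)) - dissipation t"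
    unfolding dissipation_def sum_subtractf[symmetric] by (rule sum.cong[OF refl]) (rule node_energy_balance)
  also have "(\<Sum>i\<in>{1..n}. \<Sum>j\<in>N i. quad_form (K j i) (err j t) - quad_form (K j i) (err i t)) = 0"
    using finite_neighbours link_structure
    by (intro ring_structure_balance[where \<phi> = "\<lambda>A j. quad_form A (err j t)"]) auto
  finally show ?thesis
    by simp
qed

lemma dissipation_nonneg: "0 \<le> dissipation t"
  unfolding dissipation_def using node_dissipation_nonneg by (intro sum_nonneg) auto

lemma energy_antimono:
  assumes "0 < s" "s \<le> t"
  shows "energy t \<le> energy s"
proof (rule DERIV_nonpos_imp_nonincreasing[of s t energy])
  fix u assume "s \<le> u" "u \<le> t"
  then have "0 < u"
    using assms by linarith
  then show "\<exists>y. (energy has_real_derivative y) (at u) \<and> y \<le> 0"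
    using energy_has_real_derivative dissipation_nonneg by (meson neg_le_0_iff_le)
qed (rule assms(2))

lemma node_energy_ge_norm_err:
  assumes "i \<in> {1..n}"
  shows "(norm (err i t))\<^sup>2 \<le> node_energy i t"
proof -
  have "0 \<le> integral {t - T j i..t} (\<lambda>s. quad_form (K j i) (err j s))" if "j \<in> N i" for j
  proof (rule integral_nonneg)
    have "continuous_on UNIV (\<lambda>s. quad_form (K j i) (err j s))"
      using err_continuous[OF neighbour_in_followers[OF assms that]] by (rule continuous_on_quad_form)
    then show "(\<lambda>s. quad_form (K j i) (err j s)) integrable_on {t - T j i..t}"
      by (intro integrable_continuous_real) (rule continuous_on_subset, auto)
  qed (rule link_energy_nonneg[OF assms that])
  then show ?thesis
    unfolding node_energy_def by (simp add: power2_norm_eq_inner sum_nonneg)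
qed

lemma node_energy_nonneg: "i \<in> {1..n} \<Longrightarrow> 0 \<le> node_energy i t"
  using node_energy_ge_norm_err[of i t] zero_le_power2[of "norm (err i t)"] by linarith

lemma node_energy_le_energy: "i \<in> {1..n} \<Longrightarrow> node_energy i t \<le> energy t"
  unfolding energy_def using node_energy_nonneg by (intro member_le_sum) auto

lemma energy_nonneg: "0 \<le> energy t"
  unfolding energy_def using node_energy_nonneg by (intro sum_nonneg) auto

lemma norm_err_le: "i \<in> {1..n} \<Longrightarrow> 1 \<le> t \<Longrightarrow> norm (err i t) \<le> sqrt (energy 1)"
  using node_energy_ge_norm_err node_energy_le_energy energy_antimono[of 1 t]
  by (intro real_le_rsqrt) (meson order.trans zero_less_one)

lemma norm_link_disagreement_le:
  assumes i: "i \<in> {1..n}" and j: "j \<in> N i" and t: "1 + delay_bound \<le> t"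
  shows "norm (err j (t - T j i) - err i t) \<le> 2 * sqrt (energy 1)"
  using norm_err_le[OF neighbour_in_followers[OF i j], of "t - T j i"] norm_err_le[OF i, of t]
    delay_bounds[OF i j] delay_bound_nonneg t norm_triangle_ineq4[of "err j (t - T j i)" "err i t"]
  by linarith

lemma err_rate_bounded:
  assumes i: "i \<in> {1..n}"
  shows "\<exists>C. \<forall>t\<ge>1 + delay_bound. norm (err_rate i t) \<le> C"
proof (intro exI allI impI)
  define B where "B = sqrt (energy 1)"
  fix t assume t: "1 + delay_bound \<le> t"
  have link: "norm (K j i *v (err j (t - T j i) - err i t)) \<le> onorm ((*v) (K j i)) * (2 * B)"
    if j: "j \<in> N i" for j
  proof -
    have "norm (err j (t - T j i) - err i t) \<le> 2 * B"
      unfolding B_def using i j t by (rule norm_link_disagreement_le)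
    then show ?thesis
      by (rule order.trans[OF norm_matrix_vector_mult_le mult_left_mono]) (simp add: onorm_pos_le)
  qed
  have leader: "norm (\<gamma> i *\<^sub>R (K 0 i *v err i t)) \<le> \<bar>\<gamma> i\<bar> * (onorm ((*v) (K 0 i)) * B)"
  proof -
    have "norm (err i t) \<le> B"
      using norm_err_le[OF i] t delay_bound_nonneg unfolding B_def by simp
    then have "norm (K 0 i *v err i t) \<le> onorm ((*v) (K 0 i)) * B"
      by (rule order.trans[OF norm_matrix_vector_mult_le mult_left_mono]) (simp add: onorm_pos_le)
    then show ?thesis
      by (simp add: mult_left_mono)
  qed
  have "norm (err_rate i t)
      \<le> (\<Sum>j\<in>N i. norm (K j i *v (err j (t - T j i) - err i t))) + norm (\<gamma> i *\<^sub>R (K 0 i *v err i t))"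
    unfolding err_rate_def by (rule order.trans[OF norm_triangle_ineq4 add_right_mono[OF norm_sum]])
  also have "\<dots> \<le> (\<Sum>j\<in>N i. onorm ((*v) (K j i)) * (2 * B)) + \<bar>\<gamma> i\<bar> * (onorm ((*v) (K 0 i)) * B)"
    using link leader by (intro add_mono sum_mono) auto
  finally show "norm (err_rate i t) \<le> (\<Sum>j\<in>N i. onorm ((*v) (K j i)) * (2 * B)) + \<bar>\<gamma> i\<bar> * (onorm ((*v) (K 0 i)) * B)" .
qed

lemma err_lipschitz:
  assumes i: "i \<in> {1..n}"
  obtains C where "C-lipschitz_on {1 + delay_bound..} (err i)"
proof -
  obtain C where C: "\<And>t. 1 + delay_bound \<le> t \<Longrightarrow> norm (err_rate i t) \<le> C"
    using err_rate_bounded[OF i] by blast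
  have "C-lipschitz_on {1 + delay_bound..} (err i)"
  proof (rule lipschitz_on_vector_derivative_bound)
    show "convex {1 + delay_bound..}"
      by (rule convex_real_interval)
    show "0 \<le> C"
      using C[of "1 + delay_bound"] norm_ge_zero[of "err_rate i (1 + delay_bound)"] by linarith
    fix t assume t: "t \<in> {1 + delay_bound..}"
    then show "norm (err_rate i t) \<le> C"
      by (intro C) simp
    have "0 < t"
      using t delay_bound_nonneg by simp
    then show "(err i has_vector_derivative err_rate i t) (at t within {1 + delay_bound..})"
      by (rule has_vector_derivative_at_within[OF err_has_vector_derivative[OF i]])
  qed
  then show ?thesis
    by (rule that)
qed

lemma tendsto_zero_if_energy_dissipated:
  assumes A: "sym_pos_def A" and lip: "L-lipschitz_on {t\<^sub>0..} d"
    and bound: "\<And>t. t\<^sub>0 \<le> t \<Longrightarrow> norm (d t) \<le> M" and "0 < t\<^sub>0"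
    and dominated: "\<And>t. t\<^sub>0 \<le> t \<Longrightarrow> quad_form A (d t) \<le> dissipation t"
  shows "(d \<longlongrightarrow> 0) at_top"
proof -
  have "0 \<le> M"
    using bound[of t\<^sub>0] norm_ge_zero[of "d t\<^sub>0"] by linarith
  have "((\<lambda>t. quad_form A (d t)) \<longlongrightarrow> 0) at_top"
  proof (rule lipschitz_dissipation_tendsto_zero[where V = energy and f = dissipation])
    show "(2 * onorm ((*v) A) * M * L)-lipschitz_on {t\<^sub>0..} (\<lambda>t. quad_form A (d t))"
      using lip bound \<open>0 \<le> M\<close> by (intro lipschitz_on_quad_form) auto
  qed (use energy_has_real_derivative energy_nonneg quad_form_nonneg[OF A] dominated \<open>0 < t\<^sub>0\<close> in auto)
  then show ?thesis
    by (rule tendsto_zero_of_quad_form[OF A])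
qed

lemma link_disagreement_tendsto_zero:
  assumes i: "i \<in> {1..n}" and j: "j \<in> N i"
  shows "((\<lambda>t. err j (t - T j i) - err i t) \<longlongrightarrow> 0) at_top"
proof -
  define t0 where "t0 = 1 + 2 * delay_bound"
  have late: "1 + delay_bound \<le> t - T j i" "1 + delay_bound \<le> t" if "t0 \<le> t" for t
    using that delay_bounds[OF i j] delay_bound_nonneg unfolding t0_def by auto
  obtain Ci where Ci: "Ci-lipschitz_on {1 + delay_bound..} (err i)"
    using err_lipschitz[OF i] by blast
  obtain Cj where Cj: "Cj-lipschitz_on {1 + delay_bound..} (err j)"
    using err_lipschitz[OF neighbour_in_followers[OF i j]] by blast
  have "(Cj * 1)-lipschitz_on {t0..} (\<lambda>t. err j (t - T j i))"
  proof (rule lipschitz_on_compose2[where f = "\<lambda>t. t - T j i" and g = "err j"])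
    show "1-lipschitz_on {t0..} (\<lambda>t. t - T j i)"
      by (rule lipschitz_onI) (simp_all add: dist_real_def)
    show "Cj-lipschitz_on ((\<lambda>t. t - T j i) ` {t0..}) (err j)"
      using late by (intro lipschitz_on_subset[OF Cj]) auto
  qed
  moreover have "Ci-lipschitz_on {t0..} (err i)"
    using late by (intro lipschitz_on_subset[OF Ci]) auto
  ultimately have lip: "(Cj * 1 + Ci)-lipschitz_on {t0..} (\<lambda>t. err j (t - T j i) - err i t)"
    by (rule lipschitz_on_diff)
  have bound: "norm (err j (t - T j i) - err i t) \<le> 2 * sqrt (energy 1)" if "t0 \<le> t" for t
    using i j late(2)[OF that] by (rule norm_link_disagreement_le)
  show ?thesis
    using gains i j lip bound link_energy_le_dissipation[OF i j] delay_bound_nonneg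
    by (intro tendsto_zero_if_energy_dissipated[where t\<^sub>0 = t0]) (auto simp: t0_def)
qed

lemma pinned_err_tendsto_zero:
  assumes i: "i \<in> {1..n}" and pinned: "\<gamma> i = 1"
  shows "(err i \<longlongrightarrow> 0) at_top"
proof -
  obtain C where "C-lipschitz_on {1 + delay_bound..} (err i)"
    using err_lipschitz[OF i] by blast
  then show ?thesis
    using leader_gains i pinned norm_err_le[OF i] delay_bound_nonneg leader_energy_le_dissipation[OF i pinned]
    by (intro tendsto_zero_if_energy_dissipated[where t\<^sub>0 = "1 + delay_bound" and M = "sqrt (energy 1)"]) auto
qed

lemma err_tendsto_zero_across_link:
  assumes i: "i \<in> {1..n}" and j: "j \<in> N i"
  shows "(err j \<longlongrightarrow> 0) at_top \<longleftrightarrow> (err i \<longlongrightarrow> 0) at_top"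
proof -
  have "(err j \<longlongrightarrow> 0) at_top \<longleftrightarrow> ((\<lambda>t. err j (t - T j i)) \<longlongrightarrow> 0) at_top"
    using tendsto_at_top_shift_iff[of "err j" "- T j i"] by simp
  also have "\<dots> \<longleftrightarrow> (err i \<longlongrightarrow> 0) at_top"
  proof
    assume "((\<lambda>t. err j (t - T j i)) \<longlongrightarrow> 0) at_top"
    from tendsto_diff[OF this link_disagreement_tendsto_zero[OF i j]]
    show "(err i \<longlongrightarrow> 0) at_top"
      by simp
  next
    assume "(err i \<longlongrightarrow> 0) at_top"
    from tendsto_add[OF link_disagreement_tendsto_zero[OF i j] this]
    show "((\<lambda>t. err j (t - T j i)) \<longlongrightarrow> 0) at_top"
      by simp
  qed
  finally show ?thesis .
qed

lemma err_tendsto_zero_if_reachable: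
  assumes "(0, k) \<in> (net_adj n N \<gamma>)\<^sup>*"
  shows "k = 0 \<or> k \<in> {1..n} \<and> (err k \<longlongrightarrow> 0) at_top"
  using assms
proof (induction rule: rtrancl_induct)
  case (step a b)
  from step.hyps(2) consider "(a, b) \<in> links n N" | "(b, a) \<in> links n N"
    | "b \<in> {1..n}" "\<gamma> b = 1" | "b = 0"
    unfolding net_adj_def by blast
  then show ?case
  proof cases
    case 1
    then have b: "b \<in> {1..n}" and a: "a \<in> N b"
      unfolding links_def by auto
    then have "a \<noteq> 0"
      using neighbour_in_followers[OF b a] by simp
    then show ?thesis
      using step.IH err_tendsto_zero_across_link[OF b a] b by blast
  next
    case 2
    then have a: "a \<in> {1..n}" and b: "b \<in> N a"
      unfolding links_def by auto
    then show ?thesis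
      using step.IH err_tendsto_zero_across_link[OF a b] neighbour_in_followers[OF a b] by auto
  next
    case 3
    then show ?thesis
      using pinned_err_tendsto_zero by blast
  qed simp
qed simp

lemma follower_tendsto_leader:
  assumes "network_connected n N \<gamma>" and i: "i \<in> {1..n}"
  shows "(x i \<longlongrightarrow> x0) at_top"
proof -
  have "(0, i) \<in> (net_adj n N \<gamma>)\<^sup>*"
    using assms unfolding network_connected_def by blast
  then have "(err i \<longlongrightarrow> 0) at_top"
    using err_tendsto_zero_if_reachable i by force
  then have "((\<lambda>t. err i t + x0) \<longlongrightarrow> 0 + x0) at_top"
    by (intro tendsto_add tendsto_const)
  then show ?thesis
    by (simp add: err_def)
qed

end

theorem theorem4:
  fixes n :: nat
    and x0 :: "real^'m"
    and N :: "nat \<Rightarrow> nat set"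
    and K :: "nat \<Rightarrow> nat \<Rightarrow> real^'m^'m"
    and T :: "nat \<Rightarrow> nat \<Rightarrow> real"
    and \<gamma> :: "nat \<Rightarrow> real"
    and x :: "nat \<Rightarrow> real \<Rightarrow> real^'m"
  assumes nbrs: "\<forall>i\<in>{1..n}. N i \<subseteq> {1..n} - {i}"
    and gains: "\<forall>i\<in>{1..n}. \<forall>j\<in>N i. sym_pos_def (K j i)"
    and delays: "\<forall>i\<in>{1..n}. \<forall>j\<in>N i. T j i \<ge> 0"
    and gamma01: "\<forall>i\<in>{1..n}. \<gamma> i = 0 \<or> \<gamma> i = 1"
    and leader_gains: "\<forall>i\<in>{1..n}. \<gamma> i = 1 \<longrightarrow> sym_pos_def (K 0 i)"
    and some_pinned: "\<exists>i\<in>{1..n}. \<gamma> i = 1"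
    and net_connected: "network_connected n N \<gamma>"
    and link_structure: "ring_structure n N K"
    and cont: "\<forall>i\<in>{1..n}. continuous_on UNIV (x i)"
    and dyn: "\<forall>i\<in>{1..n}. \<forall>t>0.
       (x i has_vector_derivative
          ((\<Sum>j\<in>N i. K j i *v (x j (t - T j i) - x i t)) + \<gamma> i *\<^sub>R (K 0 i *v (x0 - x i t))))
       (at t)"
  shows "\<forall>i\<in>{1..n}. (x i \<longlongrightarrow> x0) at_top"
proof -
  interpret leader_follower_network n x0 N K T \<gamma> x
  proof
    show "\<forall>i\<in>{1..n}. N i \<subseteq> {1..n}"
      using nbrs by blast
  qed (fact gains delays gamma01 leader_gains link_structure cont dyn)+
  show ?thesis
    using follower_tendsto_leader[OF net_connected] by blast
qed

end
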